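(* Let $\hat\beta$ be the Exclusive Lasso estimate, let $\mathcal{E} = \left\{ i : \frac{|X_i^T (y - X\hat\beta)|}{\|\hat\beta_g\|_1} = \lambda \right\}$ (with $g$ the group containing $i$) be the weighted equicorrelation set, and let $\gamma'$ be the vector with entries $\gamma'_i = \|\hat\beta_g\|_1 - |\hat\beta_i|$ for $i \in \mathcal{E}$, $i \in g$. Then $$\hat\beta_{\mathcal{E}} = (X_{\mathcal{E}}^T X_{\mathcal{E}} + \lambda I)^{-1}\left[X_{\mathcal{E}}^T y - \lambda \gamma' s\right] \quad\text{and}\quad \hat\beta_{\mathcal{E}^c} = 0,$$ where $s \in \{-1,1\}^{|\mathcal{E}|}$ is a vector of signs that satisfies the optimality conditions, $\gamma' s$ denotes the elementwise product, and $\mathcal{E}^c$ is the complement of $\mathcal{E}$.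
   Context: Linear model $y = X\beta^* + \epsilon$ with $X \in \mathbb{R}^{n\times p}$, centered response, and a collection $\mathcal{G}$ of non-overlapping groups partitioning $\{1,\dots,p\}$. The Exclusive Lasso estimate is $\hat\beta = \arg\min_\beta \frac{1}{2}\|y - X\beta\|_2^2 + \lambda \frac{1}{2}\sum_{g\in\mathcal{G}} \|\beta_g\|_1^2$ with $\lambda>0$. Its optimality conditions are $-X^T(y - X\hat\beta) + \lambda z = 0$ with $z_i = \mathrm{sign}(\hat\beta_i)\|\hat\beta_g\|_1$ if $\hat\beta_i \neq 0$ and $z_i \in [-\|\hat\beta_g\|_1, \|\hat\beta_g\|_1]$ if $\hat\beta_i = 0$, for $i \in g$. *)

theory Defs
  imports "Jordan_Normal_Form.Gauss_Jordan_Elimination" "Jordan_Normal_Form.DL_Submatrix"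
begin

definition group_partition :: "nat set set \<Rightarrow> nat \<Rightarrow> bool" where
  "group_partition G p \<longleftrightarrow> (\<forall>g\<in>G. g \<noteq> {}) \<and> \<Union>G = {0..<p} \<and>
     (\<forall>g\<in>G. \<forall>h\<in>G. g \<noteq> h \<longrightarrow> g \<inter> h = {})"

definition group_of :: "nat set set \<Rightarrow> nat \<Rightarrow> nat set" where
  "group_of G i = (THE g. g \<in> G \<and> i \<in> g)"

definition group_l1 :: "nat set set \<Rightarrow> real vec \<Rightarrow> nat \<Rightarrow> real" where
  "group_l1 G b i = (\<Sum>j\<in>group_of G i. \<bar>b $ j\<bar>)"

definition exclusive_lasso_obj :: "real mat \<Rightarrow> real vec \<Rightarrow> real \<Rightarrow> nat set set \<Rightarrow> real vec \<Rightarrow> real" where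
  "exclusive_lasso_obj X y lam G b =
     1/2 * ((y - X *\<^sub>v b) \<bullet> (y - X *\<^sub>v b)) + lam * (1/2) * (\<Sum>g\<in>G. (\<Sum>j\<in>g. \<bar>b $ j\<bar>)^2)"

definition is_exclusive_lasso :: "real mat \<Rightarrow> real vec \<Rightarrow> real \<Rightarrow> nat set set \<Rightarrow> real vec \<Rightarrow> bool" where
  "is_exclusive_lasso X y lam G b \<longleftrightarrow> b \<in> carrier_vec (dim_col X) \<and>
     (\<forall>\<beta>\<in>carrier_vec (dim_col X). exclusive_lasso_obj X y lam G b \<le> exclusive_lasso_obj X y lam G \<beta>)"

text \<open>Weighted equicorrelation set. (Division by 0 yields 0 in HOL, so indices whose
  group is entirely zero are never in the set since lam > 0.)\<close>
definition equicorr_set :: "real mat \<Rightarrow> real vec \<Rightarrow> real \<Rightarrow> nat set set \<Rightarrow> real vec \<Rightarrow> nat set" where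
  "equicorr_set X y lam G b =
     {i. i < dim_col X \<and> \<bar>col X i \<bullet> (y - X *\<^sub>v b)\<bar> / group_l1 G b i = lam}"

text \<open>Subvector with the entries indexed by E (in increasing order), consistent with submatrix.\<close>
definition subvec :: "'a vec \<Rightarrow> nat set \<Rightarrow> 'a vec" where
  "subvec v E = vec (card {i. i < dim_vec v \<and> i \<in> E}) (\<lambda>k. v $ pick E k)"

definition gamma' :: "nat set set \<Rightarrow> real vec \<Rightarrow> nat set \<Rightarrow> real vec" where
  "gamma' G b E = vec (card E) (\<lambda>k. group_l1 G b (pick E k) - \<bar>b $ pick E k\<bar>)"

definition vec_hadamard :: "real vec \<Rightarrow> real vec \<Rightarrow> real vec" where
  "vec_hadamard u v = vec (dim_vec u) (\<lambda>k. u $ k * v $ k)"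

end

theory Submission imports Defs "Jordan_Normal_Form.Determinant"
begin

text \<open>Moving a nonzero coordinate \<open>\<beta>\<^sub>i\<close> by \<open>t\<close> with \<open>|t| < |\<beta>\<^sub>i|\<close> keeps \<open>|\<beta>\<^sub>i + t|\<close>
  linear in \<open>t\<close>, so the objective changes by an exact quadratic in \<open>t\<close> with linear coefficient
  \<open>\<lambda> sgn(\<beta>\<^sub>i) \<parallel>\<beta>\<^sub>g\<parallel>\<^sub>1 - X\<^sub>i\<^sup>T r\<close>; minimality forces it to vanish. Hence every nonzero coordinate
  lies in the equicorrelation set \<open>\<E>\<close>, so \<open>X\<beta> = X\<^sub>\<E> \<beta>\<^sub>\<E>\<close>. Writing \<open>s\<^sub>i \<parallel>\<beta>\<^sub>g\<parallel>\<^sub>1 = \<gamma>'\<^sub>i s\<^sub>i + \<beta>\<^sub>i\<close>,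
  the optimality conditions on \<open>\<E>\<close> become the linear system
  \<open>(X\<^sub>\<E>\<^sup>T X\<^sub>\<E> + \<lambda> I) \<beta>\<^sub>\<E> = X\<^sub>\<E>\<^sup>T y - \<lambda> \<gamma>' s\<close>, whose matrix is positive definite.\<close>

lemma linear_coeff_eq_0_if_locally_nonneg:
  fixes a K d :: real
  assumes d: "d > 0" and nonneg: "\<And>t. \<bar>t\<bar> < d \<Longrightarrow> a * t + K * t\<^sup>2 \<ge> 0"
  shows "a = 0"
proof (rule ccontr)
  assume a: "a \<noteq> 0"
  define e where "e = min (d / 2) (\<bar>a\<bar> / (2 * (\<bar>K\<bar> + 1)))"
  have e: "0 < e" "e < d" using d a by (auto simp: e_def)
  have "K * e \<le> \<bar>K\<bar> * e" using e by (intro mult_right_mono) auto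
  also have "\<dots> \<le> \<bar>K\<bar> * (\<bar>a\<bar> / (2 * (\<bar>K\<bar> + 1)))"
    by (intro mult_left_mono) (auto simp: e_def)
  also have "\<dots> \<le> \<bar>a\<bar> / 2" by (simp add: field_simps)
  finally have Ke: "K * e \<le> \<bar>a\<bar> / 2" .
  define t where "t = - sgn a * e"
  have "\<bar>t\<bar> < d" using e a by (auto simp: t_def abs_mult)
  moreover have "a * t + K * t\<^sup>2 = e * (K * e - \<bar>a\<bar>)"
    using a by (cases "a > 0") (auto simp: t_def power2_eq_square algebra_simps)
  moreover have "e * (K * e - \<bar>a\<bar>) < 0" using e Ke a by (intro mult_pos_neg) auto
  ultimately show False using nonneg by fastforce
qed

lemma sum_pick:
  assumes "finite E"
  shows "(\<Sum>k<card E. f (pick E k)) = (\<Sum>i\<in>E. f i)"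
proof -
  have inj: "inj_on (pick E) {..<card E}"
    by (rule inj_onI) (metis lessThan_iff nat_neq_iff pick_mono)
  have "pick E ` {..<card E} \<subseteq> E" using pick_in_set by auto
  then have "pick E ` {..<card E} = E"
    using card_subset_eq[OF assms] card_image[OF inj] by simp
  then show ?thesis using sum.reindex[OF inj, of f] by simp
qed

lemma group_of_eq:
  assumes G: "group_partition G p" and g: "g \<in> G" "i \<in> g"
  shows "group_of G i = g"
  unfolding group_of_def
proof (rule the_equality)
  fix h assume "h \<in> G \<and> i \<in> h"
  then show "h = g" using G g unfolding group_partition_def by blast
qed (use g in simp)

lemma group_of_mem:
  assumes G: "group_partition G p" and i: "i < p"
  shows "group_of G i \<in> G" and "i \<in> group_of G i"
proof -
  have "i \<in> \<Union>G" using G i by (simp add: group_partition_def)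
  then obtain g where "g \<in> G" "i \<in> g" by blast
  then show "group_of G i \<in> G" "i \<in> group_of G i" using group_of_eq[OF G] by simp_all
qed

lemma group_partition_subset:
  assumes "group_partition G p" "g \<in> G"
  shows "g \<subseteq> {..<p}"
  using assms unfolding group_partition_def by auto

lemma group_partition_finite_group:
  assumes "group_partition G p" "g \<in> G"
  shows "finite g"
  using finite_subset[OF group_partition_subset[OF assms]] by simp

lemma group_partition_finite:
  assumes "group_partition G p"
  shows "finite G"
proof (rule finite_subset)
  show "G \<subseteq> Pow {..<p}" using group_partition_subset[OF assms] by blast
qed simp

lemma abs_le_group_l1:
  assumes "group_partition G p" "i < p"
  shows "\<bar>b $ i\<bar> \<le> group_l1 G b i"
  unfolding group_l1_def using assms group_of_mem group_partition_finite_group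
  by (intro member_le_sum) auto

lemma group_penalty_update:
  fixes b b' :: "nat \<Rightarrow> real"
  assumes G: "group_partition G p" and i: "i < p" and same: "\<And>j. j < p \<Longrightarrow> j \<noteq> i \<Longrightarrow> b' j = b j"
  defines "S \<equiv> \<Sum>j\<in>group_of G i. \<bar>b j\<bar>"
  shows "(\<Sum>g\<in>G. (\<Sum>j\<in>g. \<bar>b' j\<bar>)\<^sup>2)
         = (\<Sum>g\<in>G. (\<Sum>j\<in>g. \<bar>b j\<bar>)\<^sup>2) + (S - \<bar>b i\<bar> + \<bar>b' i\<bar>)\<^sup>2 - S\<^sup>2"
proof -
  define g0 where "g0 = group_of G i"
  have g0: "g0 \<in> G" "i \<in> g0" "finite g0"
    using group_of_mem[OF G i] group_partition_finite_group[OF G] by (auto simp: g0_def)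
  have other: "(\<Sum>j\<in>g. \<bar>b' j\<bar>) = (\<Sum>j\<in>g. \<bar>b j\<bar>)" if "g \<in> G - {g0}" for g
  proof -
    have "i \<notin> g" "g \<subseteq> {..<p}"
      using that group_of_eq[OF G] group_partition_subset[OF G] by (auto simp: g0_def)
    then show ?thesis by (intro sum.cong refl) (metis same lessThan_iff subsetD)
  qed
  have "(\<Sum>j\<in>g0 - {i}. \<bar>b' j\<bar>) = (\<Sum>j\<in>g0 - {i}. \<bar>b j\<bar>)"
    using group_partition_subset[OF G g0(1)]
    by (intro sum.cong refl) (metis same Diff_iff insertI1 lessThan_iff subsetD)
  then have "(\<Sum>j\<in>g0. \<bar>b' j\<bar>) = \<bar>b' i\<bar> + (\<Sum>j\<in>g0 - {i}. \<bar>b j\<bar>)"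
    using g0 by (simp add: sum.remove)
  also have "\<dots> = S - \<bar>b i\<bar> + \<bar>b' i\<bar>"
    using g0 by (simp add: S_def g0_def[symmetric] sum.remove)
  finally have changed: "(\<Sum>j\<in>g0. \<bar>b' j\<bar>) = S - \<bar>b i\<bar> + \<bar>b' i\<bar>" .
  have fin: "finite G" using group_partition_finite[OF G] .
  have "(\<Sum>g\<in>G. (\<Sum>j\<in>g. \<bar>b' j\<bar>)\<^sup>2)
        = (\<Sum>j\<in>g0. \<bar>b' j\<bar>)\<^sup>2 + (\<Sum>g\<in>G - {g0}. (\<Sum>j\<in>g. \<bar>b' j\<bar>)\<^sup>2)"
    using fin g0 by (simp add: sum.remove)
  also have "\<dots> = (S - \<bar>b i\<bar> + \<bar>b' i\<bar>)\<^sup>2 + (\<Sum>g\<in>G - {g0}. (\<Sum>j\<in>g. \<bar>b j\<bar>)\<^sup>2)"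
    using other by (simp only: changed) simp
  also have "(\<Sum>g\<in>G - {g0}. (\<Sum>j\<in>g. \<bar>b j\<bar>)\<^sup>2) = (\<Sum>g\<in>G. (\<Sum>j\<in>g. \<bar>b j\<bar>)\<^sup>2) - S\<^sup>2"
    using fin g0 by (simp add: S_def g0_def[symmetric] sum.remove)
  finally show ?thesis by simp
qed

lemma mult_mat_vec_unit_vec:
  fixes X :: "'a :: semiring_1 mat"
  assumes "X \<in> carrier_mat n p" "i < p"
  shows "X *\<^sub>v unit_vec p i = col X i"
  using assms by (intro eq_vecI) auto

lemma scalar_prod_self_minus_smult:
  fixes r c :: "real vec"
  assumes "r \<in> carrier_vec n" "c \<in> carrier_vec n"
  shows "(r - t \<cdot>\<^sub>v c) \<bullet> (r - t \<cdot>\<^sub>v c) = r \<bullet> r - 2 * t * (c \<bullet> r) + t\<^sup>2 * (c \<bullet> c)"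
  using assms unfolding scalar_prod_def
  by (simp add: sum_subtractf sum.distrib sum_distrib_left algebra_simps power2_eq_square)

lemma exclusive_lasso_obj_coordinate_perturbation:
  assumes X: "X \<in> carrier_mat n p" and y: "y \<in> carrier_vec n" and G: "group_partition G p"
    and b: "b \<in> carrier_vec p" and i: "i < p" and t: "\<bar>t\<bar> < \<bar>b $ i\<bar>"
  shows "exclusive_lasso_obj X y lam G (b + t \<cdot>\<^sub>v unit_vec p i)
         = exclusive_lasso_obj X y lam G b
           + (lam * sgn (b $ i) * group_l1 G b i - col X i \<bullet> (y - X *\<^sub>v b)) * t
           + ((col X i \<bullet> col X i + lam) / 2) * t\<^sup>2"
proof -
  define r where "r = y - X *\<^sub>v b"
  define c where "c = col X i"
  define \<sigma> where "\<sigma> = sgn (b $ i)"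
  define S where "S = group_l1 G b i"
  define b' where "b' = b + t \<cdot>\<^sub>v unit_vec p i"
  have rc: "r \<in> carrier_vec n" "c \<in> carrier_vec n" using X y b by (auto simp: r_def c_def)
  have "X *\<^sub>v b' = X *\<^sub>v b + t \<cdot>\<^sub>v c"
    using X b i unfolding b'_def c_def
    by (simp add: mult_add_distrib_mat_vec[of X n p] mult_mat_vec mult_mat_vec_unit_vec)
  then have resid: "y - X *\<^sub>v b' = r - t \<cdot>\<^sub>v c"
    using X y rc by (intro eq_vecI) (auto simp: r_def)
  have b': "b' $ j = b $ j + (if j = i then t else 0)" if "j < p" for j
    using b that by (simp add: b'_def unit_vec_def)
  have \<sigma>: "\<sigma>\<^sup>2 = 1" and abs_b'i: "\<bar>b' $ i\<bar> = \<bar>b $ i\<bar> + \<sigma> * t"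
    using t b'[OF i] by (cases "b $ i > 0"; auto simp: \<sigma>_def)+
  have "(\<Sum>g\<in>G. (\<Sum>j\<in>g. \<bar>b' $ j\<bar>)\<^sup>2)
        = (\<Sum>g\<in>G. (\<Sum>j\<in>g. \<bar>b $ j\<bar>)\<^sup>2) + (S + \<sigma> * t)\<^sup>2 - S\<^sup>2"
    using group_penalty_update[OF G i, of "\<lambda>j. b' $ j" "\<lambda>j. b $ j"] b' abs_b'i
    by (simp add: S_def group_l1_def)
  also have "\<dots> = (\<Sum>g\<in>G. (\<Sum>j\<in>g. \<bar>b $ j\<bar>)\<^sup>2) + 2 * \<sigma> * S * t + t\<^sup>2"
    using \<sigma> by (simp add: power2_eq_square algebra_simps)
  finally have pen: "(\<Sum>g\<in>G. (\<Sum>j\<in>g. \<bar>b' $ j\<bar>)\<^sup>2)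
        = (\<Sum>g\<in>G. (\<Sum>j\<in>g. \<bar>b $ j\<bar>)\<^sup>2) + 2 * \<sigma> * S * t + t\<^sup>2" .
  show ?thesis
    unfolding b'_def[symmetric] exclusive_lasso_obj_def resid pen
      scalar_prod_self_minus_smult[OF rc] r_def[symmetric] c_def[symmetric]
      \<sigma>_def[symmetric] S_def[symmetric]
    by (simp add: algebra_simps add_divide_distrib)
qed

lemma exclusive_lasso_stationarity:
  assumes X: "X \<in> carrier_mat n p" and y: "y \<in> carrier_vec n" and G: "group_partition G p"
    and b: "is_exclusive_lasso X y lam G b" and i: "i < p" and bi: "b $ i \<noteq> 0"
  shows "col X i \<bullet> (y - X *\<^sub>v b) = lam * (sgn (b $ i) * group_l1 G b i)"
proof -
  have bc: "b \<in> carrier_vec p" using b X by (simp add: is_exclusive_lasso_def)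
  have "lam * sgn (b $ i) * group_l1 G b i - col X i \<bullet> (y - X *\<^sub>v b) = 0"
  proof (rule linear_coeff_eq_0_if_locally_nonneg)
    show "\<bar>b $ i\<bar> > 0" using bi by simp
    fix t :: real assume t: "\<bar>t\<bar> < \<bar>b $ i\<bar>"
    have "exclusive_lasso_obj X y lam G b \<le> exclusive_lasso_obj X y lam G (b + t \<cdot>\<^sub>v unit_vec p i)"
      using b X bc by (auto simp: is_exclusive_lasso_def)
    then show "(lam * sgn (b $ i) * group_l1 G b i - col X i \<bullet> (y - X *\<^sub>v b)) * t
               + ((col X i \<bullet> col X i + lam) / 2) * t\<^sup>2 \<ge> 0"
      unfolding exclusive_lasso_obj_coordinate_perturbation[OF X y G bc i t] by simp
  qed
  then show ?thesis by simp
qed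

lemma exclusive_lasso_support_subset_equicorr_set:
  assumes X: "X \<in> carrier_mat n p" and y: "y \<in> carrier_vec n" and G: "group_partition G p"
    and b: "is_exclusive_lasso X y lam G b" and lam: "lam \<ge> 0" and i: "i < p" and bi: "b $ i \<noteq> 0"
  shows "i \<in> equicorr_set X y lam G b"
proof -
  have S: "group_l1 G b i > 0" using abs_le_group_l1[OF G i, of b] bi by linarith
  have "\<bar>col X i \<bullet> (y - X *\<^sub>v b)\<bar> = lam * group_l1 G b i"
    using exclusive_lasso_stationarity[OF X y G b i bi] S lam bi by (simp add: abs_mult)
  then show ?thesis using S i X by (simp add: equicorr_set_def)
qed

lemma card_bounded_subset:
  assumes "E \<subseteq> {..<p}"
  shows "card {j. j < p \<and> j \<in> E} = card E"
proof -
  have "{j. j < p \<and> j \<in> E} = E" using assms by auto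
  then show ?thesis by simp
qed

lemma dim_submatrix_cols:
  assumes X: "X \<in> carrier_mat n p" and E: "E \<subseteq> {..<p}"
  shows "dim_row (submatrix X UNIV E) = n" and "dim_col (submatrix X UNIV E) = card E"
proof -
  have "{i. i < dim_row X \<and> i \<in> UNIV} = {..<n}" using X by auto
  then show "dim_row (submatrix X UNIV E) = n" unfolding dim_submatrix by simp
  show "dim_col (submatrix X UNIV E) = card E"
    unfolding dim_submatrix using X card_bounded_subset[OF E] by simp
qed

lemma submatrix_cols_carrier:
  assumes "X \<in> carrier_mat n p" and "E \<subseteq> {..<p}"
  shows "submatrix X UNIV E \<in> carrier_mat n (card E)"
  using dim_submatrix_cols[OF assms] by (intro carrier_matI)

lemma submatrix_cols_index:
  assumes X: "X \<in> carrier_mat n p" and E: "E \<subseteq> {..<p}" and "a < n" "k < card E"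
  shows "submatrix X UNIV E $$ (a, k) = X $$ (a, pick E k)"
proof -
  have "a < card {i. i < dim_row X \<and> i \<in> UNIV}" "k < card {j. j < dim_col X \<and> j \<in> E}"
    using dim_submatrix_cols[OF X E] assms(3,4) unfolding dim_submatrix by simp_all
  then show ?thesis by (simp only: submatrix_index pick_UNIV)
qed

lemma subvec_carrier:
  assumes "v \<in> carrier_vec p" "E \<subseteq> {..<p}"
  shows "subvec v E \<in> carrier_vec (card E)"
  using assms card_bounded_subset[of E p] by (simp add: subvec_def)

lemma subvec_index:
  assumes "v \<in> carrier_vec p" "E \<subseteq> {..<p}" "k < card E"
  shows "subvec v E $ k = v $ pick E k"
  using assms card_bounded_subset[of E p] by (simp add: subvec_def)

lemma pick_bounded:
  assumes "E \<subseteq> {..<p}" "k < card E"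
  shows "pick E k \<in> E" and "pick E k < p"
  using assms pick_in_set[of k E] by auto

lemma submatrix_mult_subvec:
  assumes X: "X \<in> carrier_mat n p" and b: "b \<in> carrier_vec p" and E: "E \<subseteq> {..<p}"
    and supp: "\<And>i. i < p \<Longrightarrow> i \<notin> E \<Longrightarrow> b $ i = 0"
  shows "submatrix X UNIV E *\<^sub>v subvec b E = X *\<^sub>v b"
proof (rule eq_vecI)
  have XE: "submatrix X UNIV E \<in> carrier_mat n (card E)" using submatrix_cols_carrier[OF X E] .
  then show "dim_vec (submatrix X UNIV E *\<^sub>v subvec b E) = dim_vec (X *\<^sub>v b)" using X by simp
  fix a assume "a < dim_vec (X *\<^sub>v b)"
  then have a: "a < n" using X by simp
  have "(submatrix X UNIV E *\<^sub>v subvec b E) $ a = (\<Sum>k<card E. X $$ (a, pick E k) * b $ pick E k)"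
    using XE a subvec_carrier[OF b E] submatrix_cols_index[OF X E a] subvec_index[OF b E]
    by (simp add: scalar_prod_def atLeast0LessThan)
  also have "\<dots> = (\<Sum>j\<in>E. X $$ (a, j) * b $ j)"
    using E by (intro sum_pick) (auto intro: finite_subset)
  also have "\<dots> = (\<Sum>j<p. X $$ (a, j) * b $ j)"
    using E supp by (intro sum.mono_neutral_left) auto
  also have "\<dots> = (X *\<^sub>v b) $ a" using X a b by (simp add: scalar_prod_def atLeast0LessThan)
  finally show "(submatrix X UNIV E *\<^sub>v subvec b E) $ a = (X *\<^sub>v b) $ a" .
qed

lemma transpose_submatrix_mult_vec_index:
  assumes X: "X \<in> carrier_mat n p" and E: "E \<subseteq> {..<p}" and w: "w \<in> carrier_vec n"
    and k: "k < card E"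
  shows "((submatrix X UNIV E)\<^sup>T *\<^sub>v w) $ k = col X (pick E k) \<bullet> w"
proof -
  have "((submatrix X UNIV E)\<^sup>T *\<^sub>v w) $ k = (\<Sum>a = 0..<n. X $$ (a, pick E k) * w $ a)"
    using submatrix_cols_carrier[OF X E] submatrix_cols_index[OF X E _ k] w k
    by (simp add: scalar_prod_def)
  also have "\<dots> = col X (pick E k) \<bullet> w" using X w pick_bounded[OF E k] by (simp add: scalar_prod_def)
  finally show ?thesis .
qed

lemma ridge_gram_mult_vec:
  fixes A :: "'a :: comm_ring_1 mat"
  assumes A: "A \<in> carrier_mat n m" and v: "v \<in> carrier_vec m"
  shows "(A\<^sup>T * A + c \<cdot>\<^sub>m 1\<^sub>m m) *\<^sub>v v = A\<^sup>T *\<^sub>v (A *\<^sub>v v) + c \<cdot>\<^sub>v v"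
proof -
  have "(c \<cdot>\<^sub>m 1\<^sub>m m) *\<^sub>v v = c \<cdot>\<^sub>v v" using v by (intro eq_vecI) auto
  then show ?thesis
    using A v by (simp add: add_mult_distrib_mat_vec[of _ m m] assoc_mult_mat_vec[of _ m n])
qed

lemma ridge_gram_det_nonzero:
  fixes A :: "real mat"
  assumes A: "A \<in> carrier_mat n m" and c: "c > 0"
  shows "det (A\<^sup>T * A + c \<cdot>\<^sub>m 1\<^sub>m m) \<noteq> 0"
proof -
  let ?M = "A\<^sup>T * A + c \<cdot>\<^sub>m 1\<^sub>m m"
  have "v = 0\<^sub>v m" if v: "v \<in> carrier_vec m" and Mv: "?M *\<^sub>v v = 0\<^sub>v m" for v
  proof -
    have Av: "A *\<^sub>v v \<in> carrier_vec n" using A v by simp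
    have "0 = v \<bullet> (?M *\<^sub>v v)" using Mv v by simp
    also have "\<dots> = v \<bullet> (A\<^sup>T *\<^sub>v (A *\<^sub>v v)) + c * (v \<bullet> v)"
      using A v by (simp add: ridge_gram_mult_vec scalar_prod_add_distrib[of _ m])
    also have "v \<bullet> (A\<^sup>T *\<^sub>v (A *\<^sub>v v)) = (A *\<^sub>v v) \<bullet> (A *\<^sub>v v)"
      using comm_scalar_prod[of v m "A\<^sup>T *\<^sub>v (A *\<^sub>v v)"] transpose_vec_mult_scalar[OF A v Av] A v
      by simp
    finally have sum0: "(A *\<^sub>v v) \<bullet> (A *\<^sub>v v) + c * (v \<bullet> v) = 0" by simp
    have "v \<bullet> v \<ge> 0" "(A *\<^sub>v v) \<bullet> (A *\<^sub>v v) \<ge> 0"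
      using conjugate_square_ge_0_vec[of v] conjugate_square_ge_0_vec[of "A *\<^sub>v v"] by simp_all
    then have "v \<bullet> v = 0" using sum0 c by (smt (verit) mult_pos_pos)
    then show "v = 0\<^sub>v m" using conjugate_square_eq_0_vec[OF v] by simp
  qed
  then show ?thesis using det_0_iff_vec_prod_zero[of ?M m] A by auto
qed

lemma mat_inverse_mult_cancel:
  fixes M :: "'a :: field mat"
  assumes M: "M \<in> carrier_mat m m" and det: "det M \<noteq> 0" and v: "v \<in> carrier_vec m"
  shows "the (mat_inverse M) *\<^sub>v (M *\<^sub>v v) = v"
proof -
  have "M \<in> Units (ring_mat TYPE('a) m ())" using det_non_zero_imp_unit[OF M det] .
  then obtain B where B: "mat_inverse M = Some B" using mat_inverse(1)[OF M] by fastforce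
  then have "B * M = 1\<^sub>m m" "B \<in> carrier_mat m m" using mat_inverse(2)[OF M] by auto
  then show ?thesis using B M v by (simp add: assoc_mult_mat_vec[symmetric, of B m m M m v])
qed

lemma exclusive_lasso_normal_equations:
  fixes X :: "real mat" and y b s :: "real vec" and lam :: real and G :: "nat set set"
  defines "E \<equiv> equicorr_set X y lam G b"
  assumes X: "X \<in> carrier_mat n p" and y: "y \<in> carrier_vec n" and G: "group_partition G p"
    and b: "is_exclusive_lasso X y lam G b" and lam: "lam \<ge> 0"
    and s_dim: "dim_vec s = card E"
    and s_opt: "\<And>k. k < card E \<Longrightarrow>
        (b $ pick E k \<noteq> 0 \<longrightarrow> s $ k = sgn (b $ pick E k)) \<and>
        col X (pick E k) \<bullet> (y - X *\<^sub>v b) = lam * (s $ k * group_l1 G b (pick E k))"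
  shows "((submatrix X UNIV E)\<^sup>T * submatrix X UNIV E + lam \<cdot>\<^sub>m 1\<^sub>m (card E)) *\<^sub>v subvec b E
         = (submatrix X UNIV E)\<^sup>T *\<^sub>v y - lam \<cdot>\<^sub>v vec_hadamard (gamma' G b E) s"
proof -
  define XE where "XE = submatrix X UNIV E"
  have bc: "b \<in> carrier_vec p" using b X by (simp add: is_exclusive_lasso_def)
  have E: "E \<subseteq> {..<p}" using X by (auto simp: E_def equicorr_set_def)
  have XE: "XE \<in> carrier_mat n (card E)" unfolding XE_def using submatrix_cols_carrier[OF X E] .
  have bE: "subvec b E \<in> carrier_vec (card E)" using subvec_carrier[OF bc E] .
  have XEb: "XE *\<^sub>v subvec b E = X *\<^sub>v b"
    unfolding XE_def using exclusive_lasso_support_subset_equicorr_set[OF X y G b lam]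
    by (intro submatrix_mult_subvec[OF X bc E]) (auto simp: E_def)
  show ?thesis
    unfolding XE_def[symmetric]
  proof (rule eq_vecI)
    fix k assume "k < dim_vec (XE\<^sup>T *\<^sub>v y - lam \<cdot>\<^sub>v vec_hadamard (gamma' G b E) s)"
    then have k: "k < card E" using XE s_dim by (simp add: vec_hadamard_def gamma'_def)
    define i where "i = pick E k"
    have opt: "(b $ i \<noteq> 0 \<longrightarrow> s $ k = sgn (b $ i)) \<and> col X i \<bullet> (y - X *\<^sub>v b) = lam * (s $ k * group_l1 G b i)"
      using s_opt k by (simp add: i_def)
    \<comment> \<open>the sign condition turns \<open>b\<^sub>i\<close> into \<open>s\<^sub>k \<bar>b\<^sub>i\<bar>\<close>, also when \<open>b\<^sub>i = 0\<close>\<close>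
    have b_i: "b $ i = s $ k * \<bar>b $ i\<bar>" using opt by (cases "b $ i = 0") (auto simp: sgn_mult_abs)
    have "col X i \<bullet> (y - X *\<^sub>v b) = col X i \<bullet> y - col X i \<bullet> (X *\<^sub>v b)"
      using X y bc by (intro scalar_prod_minus_distrib[of _ n]) auto
    moreover have "((XE\<^sup>T * XE + lam \<cdot>\<^sub>m 1\<^sub>m (card E)) *\<^sub>v subvec b E) $ k
                   = col X i \<bullet> (X *\<^sub>v b) + lam * b $ i"
      using ridge_gram_mult_vec[OF XE bE] XEb k bE X bc
        transpose_submatrix_mult_vec_index[OF X E _ k, of "X *\<^sub>v b"] subvec_index[OF bc E k]
      by (simp add: XE_def i_def)
    moreover have "(XE\<^sup>T *\<^sub>v y - lam \<cdot>\<^sub>v vec_hadamard (gamma' G b E) s) $ k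
                   = col X i \<bullet> y - lam * ((group_l1 G b i - \<bar>b $ i\<bar>) * s $ k)"
      using k XE y s_dim transpose_submatrix_mult_vec_index[OF X E y k]
      by (simp add: XE_def vec_hadamard_def gamma'_def i_def)
    ultimately show "((XE\<^sup>T * XE + lam \<cdot>\<^sub>m 1\<^sub>m (card E)) *\<^sub>v subvec b E) $ k
                   = (XE\<^sup>T *\<^sub>v y - lam \<cdot>\<^sub>v vec_hadamard (gamma' G b E) s) $ k"
      using opt b_i by (simp add: algebra_simps)
  qed (use XE s_dim in \<open>simp add: vec_hadamard_def gamma'_def\<close>)
qed

theorem proposition2:
  fixes X :: "real mat" and y :: "real vec" and lam :: real and G :: "nat set set"
    and n p :: nat and b s :: "real vec"
  assumes X: "X \<in> carrier_mat n p"
    and y: "y \<in> carrier_vec n"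
    and centered: "(\<Sum>i<n. y $ i) = 0"
    and lam: "lam > 0"
    and G: "group_partition G p"
    and b: "is_exclusive_lasso X y lam G b"
    and s_dim: "dim_vec s = card (equicorr_set X y lam G b)"
    and s_sign: "\<forall>k < card (equicorr_set X y lam G b). s $ k = 1 \<or> s $ k = -1"
    and s_opt: "\<forall>k < card (equicorr_set X y lam G b).
        let i = pick (equicorr_set X y lam G b) k in
          (b $ i \<noteq> 0 \<longrightarrow> s $ k = sgn (b $ i)) \<and>
          col X i \<bullet> (y - X *\<^sub>v b) = lam * (s $ k * group_l1 G b i)"
  shows "(let E = equicorr_set X y lam G b; XE = submatrix X UNIV E in
           subvec b E = the (mat_inverse (XE\<^sup>T * XE + lam \<cdot>\<^sub>m 1\<^sub>m (card E)))
                          *\<^sub>v (XE\<^sup>T *\<^sub>v y - lam \<cdot>\<^sub>v vec_hadamard (gamma' G b E) s))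
         \<and> (\<forall>i < p. i \<notin> equicorr_set X y lam G b \<longrightarrow> b $ i = 0)"
proof -
  define E where "E = equicorr_set X y lam G b"
  define XE where "XE = submatrix X UNIV E"
  define M where "M = XE\<^sup>T * XE + lam \<cdot>\<^sub>m 1\<^sub>m (card E)"
  have bc: "b \<in> carrier_vec p" using b X by (simp add: is_exclusive_lasso_def)
  have E: "E \<subseteq> {..<p}" using X by (auto simp: E_def equicorr_set_def)
  have XE: "XE \<in> carrier_mat n (card E)" unfolding XE_def using submatrix_cols_carrier[OF X E] .
  have supp: "\<forall>i < p. i \<notin> E \<longrightarrow> b $ i = 0"
    using exclusive_lasso_support_subset_equicorr_set[OF X y G b] lam by (auto simp: E_def)
  have normal: "M *\<^sub>v subvec b E = XE\<^sup>T *\<^sub>v y - lam \<cdot>\<^sub>v vec_hadamard (gamma' G b E) s"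
    unfolding M_def XE_def E_def
    using exclusive_lasso_normal_equations[OF X y G b] lam s_dim s_opt by (simp add: Let_def)
  have "subvec b E = the (mat_inverse M) *\<^sub>v (M *\<^sub>v subvec b E)"
    using mat_inverse_mult_cancel[OF _ _ subvec_carrier[OF bc E], of M]
      ridge_gram_det_nonzero[OF XE lam] XE by (simp add: M_def)
  also note normal
  finally have "subvec b E = the (mat_inverse M) *\<^sub>v (XE\<^sup>T *\<^sub>v y - lam \<cdot>\<^sub>v vec_hadamard (gamma' G b E) s)" .
  then show ?thesis using supp by (simp add: Let_def E_def XE_def M_def)
qed

end
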